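(* Let $k\ge 2$ and let $T\in\mathbb{R}^{n_1\times\cdots\times n_k}$ admit a decomposition \[ T=\sum_{i=1}^r x_i^{(1)}\otimes\cdots\otimes x_i^{(k)},\qquad x_i^{(j)}\in\mathbb{R}^{n_j}\setminus\{0\}. \] Suppose there is a parameter $\mu$ with $r\mu\le \tfrac12\min_j n_j$ such that for every $j\in[k]$, \[ \sup_{i\in[r]}\frac{\|x_i^{(j)}\|_\infty^2}{\|x_i^{(j)}\|_2^2}\le\frac{\mu}{n_j},\qquad \sup_{i\ne i'\in[r]}\frac{|\langle x_i^{(j)},x_{i'}^{(j)}\rangle|}{\|x_i^{(j)}\|_2\,\|x_{i'}^{(j)}\|_2}\le\frac{\mu}{n_j}. \] Then $T$ is $(\mu_1,\mu_2)$-incoherent (in the tensor sense defined in the context) with $\mu_1\le 2\mu$ and $\mu_2\le 2\mu^{k-1}$.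
   Context: For $T\in\mathbb{R}^{n_1\times\cdots\times n_k}$ and $j\in[k]$, the mode-$j$ unfolding $\operatorname{unfold}_j(T)\in\mathbb{R}^{n_j\times m_j}$, $m_j=\prod_{\ell\ne j}n_\ell$, is defined by $[\operatorname{unfold}_j(T)]_{i_j,(i_1,\dots,i_{j-1},i_{j+1},\dots,i_k)}=T_{i_1,\dots,i_k}$. For a matrix $U$, $\|U\|_{2,\infty}=\max_i\|U_{i,\cdot}\|_2$ (maximum row Euclidean norm). The tensor $T$ is called $(\mu_1,\mu_2)$-incoherent if for every $j\in[k]$, writing the (compact) SVD $\operatorname{unfold}_j(T)=U^{(j)}\Sigma^{(j)}(V^{(j)})^\top$ with $U^{(j)}\in\mathbb{R}^{n_j\times r_j}$, $V^{(j)}\in\mathbb{R}^{m_j\times r_j}$, $r_j=\operatorname{rank}(\operatorname{unfold}_j(T))$, one has $\|U^{(j)}\|_{2,\infty}^2\le \mu_1 r_j/n_j$ and $\|V^{(j)}\|_{2,\infty}^2\le \mu_2 r_j/m_j$. *)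

theory Defs
  imports "HOL-Analysis.Analysis" "Jordan_Normal_Form.DL_Rank"
begin

text \<open>Order-k tensors of size n 0 x ... x n (k-1) are represented as functions
  from index functions (nat => nat) to reals; only indices idx with idx j < n j
  for all j < k are meaningful.\<close>

definition other_dims_prod :: "nat \<Rightarrow> (nat \<Rightarrow> nat) \<Rightarrow> nat \<Rightarrow> nat" where
  "other_dims_prod k n j = (\<Prod>l\<in>{l. l < k \<and> l \<noteq> j}. n l)"

text \<open>Decoding a column index c < m_j of the mode-j unfolding into the
  multi-index (i_l)_{l \<noteq> j} (mixed radix, fixed bijection); a is the mode-j index.\<close>
definition unfold_index :: "nat \<Rightarrow> (nat \<Rightarrow> nat) \<Rightarrow> nat \<Rightarrow> nat \<Rightarrow> nat \<Rightarrow> (nat \<Rightarrow> nat)" where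
  "unfold_index k n j a c = (\<lambda>l. if l = j then a
      else if l < k then (c div (\<Prod>l'\<in>{l'. l' < l \<and> l' \<noteq> j}. n l')) mod n l
      else 0)"

definition unfold_mat :: "nat \<Rightarrow> (nat \<Rightarrow> nat) \<Rightarrow> nat \<Rightarrow> ((nat \<Rightarrow> nat) \<Rightarrow> real) \<Rightarrow> real mat" where
  "unfold_mat k n j T = mat (n j) (other_dims_prod k n j) (\<lambda>(a, c). T (unfold_index k n j a c))"

definition compact_svd :: "real mat \<Rightarrow> real mat \<Rightarrow> real mat \<Rightarrow> real mat \<Rightarrow> bool" where
  "compact_svd A U S V \<longleftrightarrow>
     (let r = dim_col U in
       U \<in> carrier_mat (dim_row A) r \<and> S \<in> carrier_mat r r \<and> V \<in> carrier_mat (dim_col A) r \<and>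
       transpose_mat U * U = 1\<^sub>m r \<and> transpose_mat V * V = 1\<^sub>m r \<and>
       (\<forall>a<r. \<forall>b<r. a \<noteq> b \<longrightarrow> S $$ (a, b) = 0) \<and> (\<forall>a<r. S $$ (a, a) > 0) \<and>
       A = U * S * transpose_mat V)"

definition norm_2inf_sq :: "real mat \<Rightarrow> real" where
  "norm_2inf_sq U = (if dim_row U = 0 then 0
     else Max ((\<lambda>i. \<Sum>c<dim_col U. (U $$ (i, c))\<^sup>2) ` {..<dim_row U}))"

definition tensor_incoherent ::
  "nat \<Rightarrow> (nat \<Rightarrow> nat) \<Rightarrow> ((nat \<Rightarrow> nat) \<Rightarrow> real) \<Rightarrow> real \<Rightarrow> real \<Rightarrow> bool" where
  "tensor_incoherent k n T \<mu>1 \<mu>2 \<longleftrightarrow>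
     (\<forall>j<k. \<forall>U S V. compact_svd (unfold_mat k n j T) U S V \<longrightarrow>
        (let rj = vec_space.rank (n j) (unfold_mat k n j T); mj = other_dims_prod k n j in
          dim_col U = rj \<and>
          norm_2inf_sq U \<le> \<mu>1 * real rj / real (n j) \<and>
          norm_2inf_sq V \<le> \<mu>2 * real rj / real mj))"

definition vnorm2 :: "nat \<Rightarrow> (nat \<Rightarrow> real) \<Rightarrow> real" where
  "vnorm2 d v = sqrt (\<Sum>l<d. (v l)\<^sup>2)"

definition vnorm_inf :: "nat \<Rightarrow> (nat \<Rightarrow> real) \<Rightarrow> real" where
  "vnorm_inf d v = (if d = 0 then 0 else Max ((\<lambda>l. \<bar>v l\<bar>) ` {..<d}))"

definition vinner :: "nat \<Rightarrow> (nat \<Rightarrow> real) \<Rightarrow> (nat \<Rightarrow> real) \<Rightarrow> real" where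
  "vinner d v w = (\<Sum>l<d. v l * w l)"

end

theory Submission
  imports Defs
begin

(*
  Write A for the mode-j unfolding of T and p_i for the normalised x_i^(j). Then
  A = sum_i x_i^(j) y_i^T, where y_i is the Kronecker product of the other factors of the
  i-th rank-one term. Inner products and norms are multiplicative under Kronecker products,
  so the normalised y_i have spikiness and mutual coherence at most mu^(k-1)/m_j, just as the
  normalised x_i^(j) have them at most mu/n_j; in both cases r times the bound is at most 1/2.
  For a family p_1..p_r of unit vectors with mutual coherence eps, bounding the off-diagonal
  part of the Gram matrix gives ||sum_i z_i p_i||^2 >= (1 - r eps) ||z||^2 >= ||z||^2 / 2.
  Hence both families are linearly independent and A has rank r. The columns of U span the
  column space of A, which lies in span {p_i}, so the projection U U^T e_l of the l-th unit
  vector is some sum_i z_i p_i; its squared norm s is also its l-th entry, the squared norm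
  of the l-th row of U. The lower bound above and Cauchy-Schwarz give s^2 <= 2 s sum_i p_i(l)^2,
  i.e. s <= 2 r mu / n_j. Applying the same argument to A^T bounds the rows of V.
*)

section \<open>Rank and compact singular value decompositions\<close>

lemma (in vec_space) rank_mult_le:
  assumes B: "B \<in> carrier_mat n p" and C: "C \<in> carrier_mat p q"
  shows "rank (B * C) \<le> rank B"
proof -
  have BC: "B * C \<in> carrier_mat n q" using B C by auto
  have sub: "set (cols (B * C)) \<subseteq> span (set (cols B))"
  proof
    fix v assume "v \<in> set (cols (B * C))"
    then obtain i where i: "i < dim_col (B * C)" "v = col (B * C) i"
      by (metis cols_length cols_nth in_set_conv_nth)
    have "v = B *\<^sub>v col C i" using i B C by auto
    moreover have "col C i \<in> carrier_vec (dim_col B)" using B C by auto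
    ultimately have "v \<in> col_space B" unfolding col_space_eq[OF B] using B by auto
    then show "v \<in> span (set (cols B))" unfolding col_space_def .
  qed
  have cB: "set (cols B) \<subseteq> carrier_vec n" using B cols_dim by blast
  have vs: "vectorspace class_ring (vs (span (set (cols B))))"
    using span_is_subspace[THEN subspace_is_vs, OF cB] by auto
  have sm: "submodule class_ring (span (set (cols B))) V" using cB by (simp add: span_is_submodule)
  have ss: "subspace class_ring (span (set (cols (B * C)))) (vs (span (set (cols B))))"
    using vectorspace.span_is_subspace[OF vs, of "set (cols (B * C))",
        unfolded span_li_not_depend(1)[OF sub sm]] sub by auto
  have fin_dim: "vectorspace.fin_dim class_ring (vs (span (set (cols B))))"
    "vectorspace.fin_dim class_ring (vs (span (set (cols B)))\<lparr>carrier := span (set (cols (B * C)))\<rparr>)"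
    using fin_dim_span_cols B BC by auto
  show ?thesis unfolding rank_def using vectorspace.subspace_dim[OF vs ss fin_dim] by simp
qed

lemma (in vec_space) rank_eq_dim_col_if_kernel_trivial:
  assumes A: "A \<in> carrier_mat n nc"
    and ker: "\<And>v. v \<in> carrier_vec nc \<Longrightarrow> A *\<^sub>v v = 0\<^sub>v n \<Longrightarrow> v = 0\<^sub>v nc"
  shows "rank A = nc"
proof -
  have "distinct (cols A)"
  proof (rule ccontr)
    assume "\<not> distinct (cols A)"
    then obtain i i' where ii: "i < nc" "i' < nc" "i \<noteq> i'" "col A i = col A i'"
      using A by (auto simp: distinct_conv_nth)
    define v :: "'a vec" where "v = unit_vec nc i - unit_vec nc i'"
    have v: "v \<in> carrier_vec nc" unfolding v_def by auto
    have col: "A *\<^sub>v unit_vec nc t = col A t" if "t < nc" for t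
      using A that by (intro eq_vecI) auto
    have "A *\<^sub>v v = col A i - col A i'"
      unfolding v_def using A ii by (simp add: mult_minus_distrib_mat_vec col)
    then have "A *\<^sub>v v = 0\<^sub>v n" using ii(4) A by auto
    then have "v = 0\<^sub>v nc" using ker v by auto
    moreover have "v $ i = 1" using ii unfolding v_def by simp
    ultimately show False using ii by simp
  qed
  moreover have "lin_indpt (set (cols A))"
  proof
    assume "lin_dep (set (cols A))"
    then obtain v where "v \<in> carrier_vec nc" "v \<noteq> 0\<^sub>v nc" "A *\<^sub>v v = 0\<^sub>v n"
      using lin_depE[OF A _ \<open>distinct (cols A)\<close>] by blast
    then show False using ker by auto
  qed
  ultimately show ?thesis using lin_indpt_full_rank[OF A] by auto
qed

lemma index_mult_mat_sum:
  assumes "B \<in> carrier_mat nr p" "C \<in> carrier_mat p nc" "a < nr" "c < nc"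
  shows "(B * C) $$ (a, c) = (\<Sum>t<p. B $$ (a, t) * C $$ (t, c))"
  using assms by (auto simp: scalar_prod_def atLeast0LessThan)

lemma index_mult_mat_vec_sum:
  assumes "B \<in> carrier_mat nr nc" "x \<in> carrier_vec nc" "a < nr"
  shows "(B *\<^sub>v x) $ a = (\<Sum>t<nc. B $$ (a, t) * x $ t)"
  using assms by (auto simp: scalar_prod_def atLeast0LessThan)

lemma compact_svdD:
  assumes "compact_svd A U S V"
  shows "U \<in> carrier_mat (dim_row A) (dim_col U)" "S \<in> carrier_mat (dim_col U) (dim_col U)"
    "V \<in> carrier_mat (dim_col A) (dim_col U)"
    "transpose_mat U * U = 1\<^sub>m (dim_col U)" "transpose_mat V * V = 1\<^sub>m (dim_col U)"
    "\<And>a b. a < dim_col U \<Longrightarrow> b < dim_col U \<Longrightarrow> a \<noteq> b \<Longrightarrow> S $$ (a, b) = 0"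
    "\<And>a. a < dim_col U \<Longrightarrow> S $$ (a, a) > 0"
    "A = U * S * transpose_mat V"
  using assms unfolding compact_svd_def Let_def by auto

lemma compact_svd_transpose:
  assumes svd: "compact_svd A U S V"
  shows "compact_svd (transpose_mat A) V S U"
proof -
  define \<rho> where "\<rho> = dim_col U"
  note d = compact_svdD[OF svd, folded \<rho>_def]
  have ST: "transpose_mat S = S"
  proof (rule eq_matI)
    fix a b assume "a < dim_row S" "b < dim_col S"
    then show "transpose_mat S $$ (a, b) = S $$ (a, b)"
      using d(2,6) by (cases "a = b") auto
  qed (use d(2) in auto)
  have Vt: "transpose_mat V \<in> carrier_mat \<rho> (dim_col A)" and Ut: "transpose_mat U \<in> carrier_mat \<rho> (dim_row A)"
    using d(1,3) by auto
  have "transpose_mat A = V * transpose_mat (U * S)"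
    unfolding d(8) by (simp add: transpose_mult[OF mult_carrier_mat[OF d(1,2)] Vt])
  also have "\<dots> = V * S * transpose_mat U"
    by (simp add: transpose_mult[OF d(1,2)] ST assoc_mult_mat[OF d(3,2) Ut])
  finally have At: "transpose_mat A = V * S * transpose_mat U" .
  have dV: "dim_col V = \<rho>" using d(3) by auto
  have "\<forall>a<\<rho>. \<forall>b<\<rho>. a \<noteq> b \<longrightarrow> S $$ (a, b) = 0" "\<forall>a<\<rho>. S $$ (a, a) > 0"
    using d(6,7) by auto
  then show ?thesis
    unfolding compact_svd_def Let_def dV using d(1-5) At by auto
qed

lemma compact_svd_left_factor:
  assumes svd: "compact_svd A U S V"
  obtains W where "W \<in> carrier_mat (dim_col A) (dim_col U)" "U = A * W"
proof -
  define \<rho> where "\<rho> = dim_col U"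
  note d = compact_svdD[OF svd, folded \<rho>_def]
  define D where "D = mat \<rho> \<rho> (\<lambda>(a, b). if a = b then 1 / S $$ (a, a) else 0)"
  have D: "D \<in> carrier_mat \<rho> \<rho>" unfolding D_def by simp
  have SD: "S * D = 1\<^sub>m \<rho>"
  proof (rule eq_matI)
    fix a b assume "a < dim_row (1\<^sub>m \<rho> :: real mat)" "b < dim_col (1\<^sub>m \<rho> :: real mat)"
    then have ab: "a < \<rho>" "b < \<rho>" by auto
    have "(S * D) $$ (a, b) = (\<Sum>t\<in>{0..<\<rho>}. S $$ (a, t) * D $$ (t, b))"
      using ab d(2) D by (simp add: scalar_prod_def)
    also have "\<dots> = (\<Sum>t\<in>{0..<\<rho>}. if t = b then S $$ (a, b) * D $$ (b, b) else 0)"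
      using ab d(6) by (intro sum.cong) (auto simp: D_def)
    also have "\<dots> = 1\<^sub>m \<rho> $$ (a, b)"
      using ab d(6) d(7)[OF ab(2)] by (auto simp: D_def)
    finally show "(S * D) $$ (a, b) = 1\<^sub>m \<rho> $$ (a, b)" .
  qed (use d(2) D in auto)
  have Vt: "transpose_mat V \<in> carrier_mat \<rho> (dim_col A)" using d(3) by auto
  have "A * (V * D) = U * S * (transpose_mat V * (V * D))"
    unfolding d(8) by (rule assoc_mult_mat[OF mult_carrier_mat[OF d(1,2)] Vt mult_carrier_mat[OF d(3) D]])
  also have "transpose_mat V * (V * D) = (transpose_mat V * V) * D"
    by (rule assoc_mult_mat[OF Vt d(3) D, symmetric])
  also have "\<dots> = D"
    using d(5) D by simp
  also have "U * S * D = U"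
    using assoc_mult_mat[OF d(1,2) D] SD d(1) by simp
  finally have "U = A * (V * D)" ..
  moreover have "V * D \<in> carrier_mat (dim_col A) (dim_col U)"
    using mult_carrier_mat[OF d(3) D] unfolding \<rho>_def .
  ultimately show ?thesis using that by blast
qed

lemma compact_svd_rank:
  assumes svd: "compact_svd A U S V"
  shows "dim_col U = vec_space.rank (dim_row A) A"
proof -
  define \<rho> where "\<rho> = dim_col U"
  note d = compact_svdD[OF svd, folded \<rho>_def]
  obtain W where W: "W \<in> carrier_mat (dim_col A) \<rho>" "U = A * W"
    using compact_svd_left_factor[OF svd] unfolding \<rho>_def .
  have A_eq: "A = U * (S * transpose_mat V)"
    unfolding d(8) using d(3) by (intro assoc_mult_mat[OF d(1,2)]) auto
  have "vec_space.rank (dim_row A) (U * (S * transpose_mat V)) \<le> vec_space.rank (dim_row A) U"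
    using d(2,3) by (intro vec_space.rank_mult_le[OF d(1)]) auto
  then have "vec_space.rank (dim_row A) A \<le> vec_space.rank (dim_row A) U"
    by (simp only: A_eq[symmetric])
  moreover have "vec_space.rank (dim_row A) U \<le> vec_space.rank (dim_row A) A"
    using vec_space.rank_mult_le[OF carrier_matI W(1)] W(2) by simp
  moreover have "vec_space.rank (dim_row A) U = \<rho>"
  proof (rule vec_space.rank_eq_dim_col_if_kernel_trivial[OF d(1)])
    fix v :: "real vec" assume v: "v \<in> carrier_vec \<rho>" and Uv: "U *\<^sub>v v = 0\<^sub>v (dim_row A)"
    have "v = (transpose_mat U * U) *\<^sub>v v" using d(4) v by simp
    also have "\<dots> = transpose_mat U *\<^sub>v (U *\<^sub>v v)" using d(1) v by auto
    also have "\<dots> = 0\<^sub>v \<rho>" unfolding Uv using d(1) by auto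
    finally show "v = 0\<^sub>v \<rho>" .
  qed
  ultimately show ?thesis unfolding \<rho>_def by linarith
qed

lemma norm_2inf_sq_le:
  assumes "\<And>i. i < dim_row M \<Longrightarrow> (\<Sum>c<dim_col M. (M $$ (i, c))\<^sup>2) \<le> B" and "0 \<le> B"
  shows "norm_2inf_sq M \<le> B"
proof (cases "dim_row M = 0")
  case False
  then have "{..<dim_row M} \<noteq> {}" by auto
  then show ?thesis using assms(1) \<open>dim_row M \<noteq> 0\<close> unfolding norm_2inf_sq_def
    by (simp add: Max_le_iff[OF finite_imageI[OF finite_lessThan]])
qed (use assms(2) in \<open>simp add: norm_2inf_sq_def\<close>)

section \<open>Norms, spikiness and coherence of vectors\<close>

lemma sum_sq_eq_0_iff: "(\<Sum>i<r. (z i)\<^sup>2) = (0::real) \<longleftrightarrow> (\<forall>i<r::nat. z i = 0)"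
  by (auto simp: sum_nonneg_eq_0_iff)

lemma vnorm2_nonneg: "0 \<le> vnorm2 d v"
  unfolding vnorm2_def by (simp add: sum_nonneg)

lemma vnorm2_sq: "(vnorm2 d v)\<^sup>2 = (\<Sum>l<d. (v l)\<^sup>2)"
  unfolding vnorm2_def by (simp add: sum_nonneg)

lemma vnorm2_eq_0_iff: "vnorm2 d v = 0 \<longleftrightarrow> (\<forall>l<d. v l = 0)"
  unfolding vnorm2_def by (simp add: sum_nonneg sum_sq_eq_0_iff)

lemma sq_le_vnorm_inf_sq: "l < d \<Longrightarrow> (v l)\<^sup>2 \<le> (vnorm_inf d v)\<^sup>2"
proof -
  assume "l < d"
  then have "\<bar>v l\<bar> \<le> vnorm_inf d v" unfolding vnorm_inf_def by (auto intro!: Max_ge)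
  then have "\<bar>v l\<bar>\<^sup>2 \<le> (vnorm_inf d v)\<^sup>2" by (rule power_mono) simp
  then show ?thesis by simp
qed

lemma spikiness_pos:
  assumes "l < d" "v l \<noteq> 0"
  shows "0 < (vnorm_inf d v)\<^sup>2 / (vnorm2 d v)\<^sup>2"
proof -
  have "0 < (v l)\<^sup>2" using assms(2) by simp
  also have "\<dots> \<le> (vnorm_inf d v)\<^sup>2" by (rule sq_le_vnorm_inf_sq[OF assms(1)])
  finally have "0 < (vnorm_inf d v)\<^sup>2" .
  moreover have "vnorm2 d v \<noteq> 0" using assms by (auto simp: vnorm2_eq_0_iff)
  ultimately show ?thesis by (intro divide_pos_pos) auto
qed

section \<open>Near-orthonormal families\<close>

definition riesz_lower_bound :: "real \<Rightarrow> nat \<Rightarrow> nat \<Rightarrow> (nat \<Rightarrow> nat \<Rightarrow> real) \<Rightarrow> bool" where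
  "riesz_lower_bound c r N p \<longleftrightarrow>
     (\<forall>z. c * (\<Sum>i<r. (z i)\<^sup>2) \<le> (\<Sum>a<N. (\<Sum>i<r. z i * p i a)\<^sup>2))"

definition independent_family :: "nat \<Rightarrow> nat \<Rightarrow> (nat \<Rightarrow> nat \<Rightarrow> real) \<Rightarrow> bool" where
  "independent_family r N v \<longleftrightarrow>
     (\<forall>z. (\<forall>a<N. (\<Sum>i<r. z i * v i a) = 0) \<longrightarrow> (\<forall>i<r. z i = 0))"

lemma sum_sq_lincomb:
  fixes z :: "nat \<Rightarrow> real"
  shows "(\<Sum>a<N. (\<Sum>i<r. z i * p i a)\<^sup>2) = (\<Sum>i<r. \<Sum>i'<r. z i * z i' * (\<Sum>a<N. p i a * p i' a))"
proof -
  have "(\<Sum>a<N. (\<Sum>i<r. z i * p i a)\<^sup>2) = (\<Sum>a<N. \<Sum>i<r. \<Sum>i'<r. z i * z i' * (p i a * p i' a))"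
    unfolding power2_eq_square sum_product by (simp add: algebra_simps)
  also have "\<dots> = (\<Sum>i<r. \<Sum>i'<r. z i * z i' * (\<Sum>a<N. p i a * p i' a))"
    by (simp add: sum.swap[of _ "{..<N}"] sum_distrib_left)
  finally show ?thesis .
qed

lemma riesz_lower_bound_if_near_orthonormal:
  assumes unit: "\<And>i. i < r \<Longrightarrow> (\<Sum>a<N. (p i a)\<^sup>2) = 1"
    and off: "\<And>i i'. i < r \<Longrightarrow> i' < r \<Longrightarrow> i \<noteq> i' \<Longrightarrow> \<bar>\<Sum>a<N. p i a * p i' a\<bar> \<le> \<epsilon>"
    and "0 \<le> \<epsilon>"
  shows "riesz_lower_bound (1 - r * \<epsilon>) r N p"
  unfolding riesz_lower_bound_def
proof
  fix z :: "nat \<Rightarrow> real"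
  define g where "g i i' = (\<Sum>a<N. p i a * p i' a)" for i i'
  define Z where "Z = (\<Sum>i<r. (z i)\<^sup>2)"
  have "(\<Sum>a<N. (\<Sum>i<r. z i * p i a)\<^sup>2) = (\<Sum>i<r. \<Sum>i'<r. z i * z i' * g i i')"
    unfolding g_def by (rule sum_sq_lincomb)
  also have "\<dots> \<ge> (\<Sum>i<r. \<Sum>i'<r. (if i = i' then (z i)\<^sup>2 else 0) - \<epsilon> * (\<bar>z i\<bar> * \<bar>z i'\<bar>))"
  proof (intro sum_mono)
    fix i i' assume "i \<in> {..<r}" "i' \<in> {..<r}"
    then have i: "i < r" "i' < r" by auto
    show "(if i = i' then (z i)\<^sup>2 else 0) - \<epsilon> * (\<bar>z i\<bar> * \<bar>z i'\<bar>) \<le> z i * z i' * g i i'"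
    proof (cases "i = i'")
      case True
      then show ?thesis using unit[OF i(1)] \<open>0 \<le> \<epsilon>\<close> by (simp add: g_def power2_eq_square)
    next
      case False
      have "\<bar>z i * z i' * g i i'\<bar> = (\<bar>z i\<bar> * \<bar>z i'\<bar>) * \<bar>g i i'\<bar>"
        by (simp add: abs_mult)
      also have "\<dots> \<le> (\<bar>z i\<bar> * \<bar>z i'\<bar>) * \<epsilon>"
        using off[OF i False] unfolding g_def by (intro mult_left_mono) auto
      finally show ?thesis using False by (simp add: abs_le_iff algebra_simps)
    qed
  qed
  also have "(\<Sum>i<r. \<Sum>i'<r. (if i = i' then (z i)\<^sup>2 else 0) - \<epsilon> * (\<bar>z i\<bar> * \<bar>z i'\<bar>))
      = Z - \<epsilon> * (\<Sum>i<r. \<bar>z i\<bar>)\<^sup>2"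
    unfolding Z_def power2_eq_square sum_product sum_subtractf by (simp add: sum_distrib_left)
  also have "(\<Sum>i<r. \<bar>z i\<bar>)\<^sup>2 \<le> r * Z"
    using Cauchy_Schwarz_ineq_sum[of "\<lambda>_. 1" "\<lambda>i. \<bar>z i\<bar>" "{..<r}"] unfolding Z_def by simp
  then have "\<epsilon> * (\<Sum>i<r. \<bar>z i\<bar>)\<^sup>2 \<le> \<epsilon> * (r * Z)"
    using \<open>0 \<le> \<epsilon>\<close> by (rule mult_left_mono)
  then have "Z - \<epsilon> * (\<Sum>i<r. \<bar>z i\<bar>)\<^sup>2 \<ge> (1 - r * \<epsilon>) * Z"
    by (simp add: algebra_simps)
  finally show "(1 - r * \<epsilon>) * (\<Sum>i<r. (z i)\<^sup>2) \<le> (\<Sum>a<N. (\<Sum>i<r. z i * p i a)\<^sup>2)"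
    unfolding Z_def .
qed

lemma riesz_lower_bound_normalized:
  assumes nonzero: "\<And>i. i < r \<Longrightarrow> vnorm2 N (v i) \<noteq> 0"
    and coherent: "\<And>i i'. i < r \<Longrightarrow> i' < r \<Longrightarrow> i \<noteq> i' \<Longrightarrow>
        \<bar>vinner N (v i) (v i')\<bar> / (vnorm2 N (v i) * vnorm2 N (v i')) \<le> \<epsilon>"
    and "0 \<le> \<epsilon>"
  shows "riesz_lower_bound (1 - r * \<epsilon>) r N (\<lambda>i a. v i a / vnorm2 N (v i))"
proof (rule riesz_lower_bound_if_near_orthonormal[OF _ _ \<open>0 \<le> \<epsilon>\<close>])
  fix i assume "i < r"
  then show "(\<Sum>a<N. (v i a / vnorm2 N (v i))\<^sup>2) = 1"
    using nonzero by (simp add: power_divide flip: sum_divide_distrib vnorm2_sq)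
next
  fix i i' assume "i < r" "i' < r" "i \<noteq> i'"
  have "(\<Sum>a<N. v i a / vnorm2 N (v i) * (v i' a / vnorm2 N (v i')))
      = vinner N (v i) (v i') / (vnorm2 N (v i) * vnorm2 N (v i'))"
    unfolding vinner_def by (simp add: sum_divide_distrib)
  then show "\<bar>\<Sum>a<N. v i a / vnorm2 N (v i) * (v i' a / vnorm2 N (v i'))\<bar> \<le> \<epsilon>"
    using coherent[OF \<open>i < r\<close> \<open>i' < r\<close> \<open>i \<noteq> i'\<close>] by (simp add: abs_divide abs_mult vnorm2_nonneg)
qed

lemma independent_family_if_near_orthonormal:
  assumes nonzero: "\<And>i. i < r \<Longrightarrow> vnorm2 N (v i) \<noteq> 0"
    and coherent: "\<And>i i'. i < r \<Longrightarrow> i' < r \<Longrightarrow> i \<noteq> i' \<Longrightarrow>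
        \<bar>vinner N (v i) (v i')\<bar> / (vnorm2 N (v i) * vnorm2 N (v i')) \<le> \<epsilon>"
    and "0 \<le> \<epsilon>" and "r * \<epsilon> < 1"
  shows "independent_family r N v"
  unfolding independent_family_def
proof (intro allI impI)
  fix z i assume z: "\<forall>a<N. (\<Sum>i<r. z i * v i a) = 0" and "i < r"
  define z' where "z' i = z i * vnorm2 N (v i)" for i
  have "(1 - r * \<epsilon>) * (\<Sum>i<r. (z' i)\<^sup>2) \<le> (\<Sum>a<N. (\<Sum>i<r. z' i * (v i a / vnorm2 N (v i)))\<^sup>2)"
    using riesz_lower_bound_normalized[OF nonzero coherent \<open>0 \<le> \<epsilon>\<close>]
    unfolding riesz_lower_bound_def by (rule spec)
  also have "\<dots> = 0"
  proof -
    have "(\<Sum>i<r. z' i * (v i a / vnorm2 N (v i))) = (\<Sum>i<r. z i * v i a)" for a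
      using nonzero by (intro sum.cong) (auto simp: z'_def)
    then show ?thesis using z by simp
  qed
  finally have "(\<Sum>i<r. (z' i)\<^sup>2) = 0"
    using \<open>r * \<epsilon> < 1\<close> by (simp add: mult_le_0_iff sum_nonneg order.antisym)
  then show "z i = 0" using \<open>i < r\<close> nonzero unfolding sum_sq_eq_0_iff z'_def by simp
qed

lemma orthonormal_cols_row_norm_le:
  fixes U :: "real mat" and p \<beta> :: "nat \<Rightarrow> nat \<Rightarrow> real"
  assumes U: "U \<in> carrier_mat N \<rho>" and UU: "transpose_mat U * U = 1\<^sub>m \<rho>"
    and rep: "\<And>a b. a < N \<Longrightarrow> b < \<rho> \<Longrightarrow> U $$ (a, b) = (\<Sum>i<r. p i a * \<beta> i b)"
    and riesz: "riesz_lower_bound c r N p" and "0 < c" and l: "l < N"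
  shows "(\<Sum>b<\<rho>. (U $$ (l, b))\<^sup>2) \<le> (\<Sum>i<r. (p i l)\<^sup>2) / c"
proof -
  have orth: "(\<Sum>a<N. U $$ (a, b) * U $$ (a, b')) = (if b = b' then 1 else 0)"
    if "b < \<rho>" "b' < \<rho>" for b b'
  proof -
    have "(transpose_mat U * U) $$ (b, b') = (\<Sum>a<N. U $$ (a, b) * U $$ (a, b'))"
      using that U by (auto simp: scalar_prod_def atLeast0LessThan)
    then show ?thesis using UU that by simp
  qed
  define w where "w b = U $$ (l, b)" for b
  define s where "s = (\<Sum>b<\<rho>. (w b)\<^sup>2)"
  define P where "P = (\<Sum>i<r. (p i l)\<^sup>2)"
  \<comment> \<open>\<open>u = U U\<^sup>T e\<^sub>l\<close>; both its squared norm and its \<open>l\<close>-th entry equal \<open>s\<close>.\<close>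
  define u where "u a = (\<Sum>b<\<rho>. w b * U $$ (a, b))" for a
  define z where "z i = (\<Sum>b<\<rho>. \<beta> i b * w b)" for i
  have "s \<ge> 0" "P \<ge> 0" unfolding s_def P_def by (auto intro: sum_nonneg)
  have ul: "u l = s" unfolding u_def s_def w_def by (simp add: power2_eq_square)
  have u_sq: "(\<Sum>a<N. (u a)\<^sup>2) = s"
  proof -
    have "(\<Sum>a<N. (u a)\<^sup>2) = (\<Sum>b<\<rho>. \<Sum>b'<\<rho>. w b * w b' * (\<Sum>a<N. U $$ (a, b) * U $$ (a, b')))"
      unfolding u_def by (rule sum_sq_lincomb)
    also have "\<dots> = (\<Sum>b<\<rho>. \<Sum>b'<\<rho>. if b' = b then w b * w b else 0)"
      by (intro sum.cong refl) (auto simp: orth)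
    finally show ?thesis unfolding s_def by (simp add: power2_eq_square)
  qed
  have uz: "u a = (\<Sum>i<r. z i * p i a)" if "a < N" for a
  proof -
    have "u a = (\<Sum>b<\<rho>. \<Sum>i<r. p i a * \<beta> i b * w b)"
      unfolding u_def by (intro sum.cong refl) (simp add: rep that sum_distrib_left ac_simps)
    also have "\<dots> = (\<Sum>i<r. z i * p i a)"
      unfolding z_def by (subst sum.swap) (simp add: sum_distrib_left sum_distrib_right ac_simps)
    finally show ?thesis .
  qed
  have "c * (\<Sum>i<r. (z i)\<^sup>2) \<le> (\<Sum>a<N. (\<Sum>i<r. z i * p i a)\<^sup>2)"
    using riesz unfolding riesz_lower_bound_def by (rule spec)
  also have "\<dots> = s"
    unfolding u_sq[symmetric] by (intro sum.cong) (simp_all add: uz)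
  finally have "c * (\<Sum>i<r. (z i)\<^sup>2) \<le> s" .
  have "s\<^sup>2 = (\<Sum>i<r. z i * p i l)\<^sup>2" using ul uz[OF l] by simp
  also have "\<dots> \<le> (\<Sum>i<r. (z i)\<^sup>2) * P" unfolding P_def by (rule Cauchy_Schwarz_ineq_sum)
  also have "\<dots> \<le> s / c * P"
    using \<open>c * (\<Sum>i<r. (z i)\<^sup>2) \<le> s\<close> \<open>0 < c\<close> \<open>P \<ge> 0\<close>
    by (intro mult_right_mono) (simp_all add: field_simps)
  finally have ss: "s * s \<le> (P / c) * s" by (simp add: power2_eq_square ac_simps)
  have "s \<le> P / c"
  proof (cases "s = 0")
    case False
    then show ?thesis using mult_right_le_imp_le[OF ss] \<open>s \<ge> 0\<close> by simp
  qed (use \<open>P \<ge> 0\<close> \<open>0 < c\<close> in simp)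
  then show ?thesis unfolding s_def P_def w_def .
qed

lemma compact_svd_row_norm_le:
  fixes r :: nat and \<epsilon> s :: real
  assumes svd: "compact_svd A U S V" and A: "A \<in> carrier_mat N m"
    and entries: "\<And>a c. a < N \<Longrightarrow> c < m \<Longrightarrow> A $$ (a, c) = (\<Sum>i<r. v i a * w i c)"
    and nonzero: "\<And>i. i < r \<Longrightarrow> vnorm2 N (v i) \<noteq> 0"
    and coherent: "\<And>i i'. i < r \<Longrightarrow> i' < r \<Longrightarrow> i \<noteq> i' \<Longrightarrow>
        \<bar>vinner N (v i) (v i')\<bar> / (vnorm2 N (v i) * vnorm2 N (v i')) \<le> \<epsilon>"
    and "0 \<le> \<epsilon>" and "r * \<epsilon> < 1"
    and spiky: "\<And>i a. i < r \<Longrightarrow> a < N \<Longrightarrow> (v i a)\<^sup>2 / (vnorm2 N (v i))\<^sup>2 \<le> s"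
    and l: "l < N"
  shows "(\<Sum>b<dim_col U. (U $$ (l, b))\<^sup>2) \<le> r * s / (1 - r * \<epsilon>)"
proof -
  define \<rho> where "\<rho> = dim_col U"
  note d = compact_svdD[OF svd, folded \<rho>_def]
  obtain W where W: "W \<in> carrier_mat m \<rho>" and UAW: "U = A * W"
    using compact_svd_left_factor[OF svd] A unfolding \<rho>_def by auto
  define p where "p i a = v i a / vnorm2 N (v i)" for i a
  define \<beta> where "\<beta> i b = vnorm2 N (v i) * (\<Sum>c<m. w i c * W $$ (c, b))" for i b
  have rep: "U $$ (a, b) = (\<Sum>i<r. p i a * \<beta> i b)" if "a < N" "b < \<rho>" for a b
  proof -
    have "U $$ (a, b) = (\<Sum>c<m. \<Sum>i<r. v i a * w i c * W $$ (c, b))"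
      unfolding UAW index_mult_mat_sum[OF A W that]
      using that by (simp add: entries sum_distrib_right)
    also have "\<dots> = (\<Sum>i<r. p i a * \<beta> i b)"
      unfolding p_def \<beta>_def using nonzero
      by (subst sum.swap) (auto intro!: sum.cong simp: sum_distrib_left ac_simps)
    finally show ?thesis .
  qed
  have U: "U \<in> carrier_mat N \<rho>" using d(1) A by auto
  have "riesz_lower_bound (1 - r * \<epsilon>) r N p"
    unfolding p_def by (rule riesz_lower_bound_normalized[OF nonzero coherent \<open>0 \<le> \<epsilon>\<close>])
  then have "(\<Sum>b<\<rho>. (U $$ (l, b))\<^sup>2) \<le> (\<Sum>i<r. (p i l)\<^sup>2) / (1 - r * \<epsilon>)"
    using \<open>r * \<epsilon> < 1\<close> by (intro orthonormal_cols_row_norm_le[OF U d(4) rep _ _ l]) auto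
  also have "(\<Sum>i<r. (p i l)\<^sup>2) \<le> r * s"
    using sum_mono[of "{..<r}" "\<lambda>i. (p i l)\<^sup>2" "\<lambda>_. s"] spiky l
    unfolding p_def by (simp add: power_divide)
  finally show ?thesis unfolding \<rho>_def using \<open>r * \<epsilon> < 1\<close> by (simp add: divide_right_mono)
qed

lemma rank_outer_sum_le:
  assumes A: "A \<in> carrier_mat N m"
    and entries: "\<And>a c. a < N \<Longrightarrow> c < m \<Longrightarrow> A $$ (a, c) = (\<Sum>i<r. v i a * w i c)"
  shows "vec_space.rank N A \<le> r"
proof -
  define Vm where "Vm = mat N r (\<lambda>(a, i). v i a)"
  define Wt where "Wt = mat r m (\<lambda>(i, c). w i c)"
  have Vm: "Vm \<in> carrier_mat N r" and Wt: "Wt \<in> carrier_mat r m"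
    unfolding Vm_def Wt_def by auto
  have "A = Vm * Wt"
  proof (rule eq_matI)
    fix a c assume "a < dim_row (Vm * Wt)" "c < dim_col (Vm * Wt)"
    then have ac: "a < N" "c < m" using Vm Wt by auto
    then show "A $$ (a, c) = (Vm * Wt) $$ (a, c)"
      unfolding index_mult_mat_sum[OF Vm Wt ac] by (simp add: entries Vm_def Wt_def)
  qed (use A Vm Wt in auto)
  then show ?thesis
    using vec_space.rank_mult_le[OF Vm Wt] vec_space.rank_le_nc[OF Vm] by simp
qed

lemma rank_outer_sum:
  assumes A: "A \<in> carrier_mat N m"
    and entries: "\<And>a c. a < N \<Longrightarrow> c < m \<Longrightarrow> A $$ (a, c) = (\<Sum>i<r. v i a * w i c)"
    and v: "independent_family r N v" and w: "independent_family r m w"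
  shows "vec_space.rank N A = r"
proof -
  define Wm where "Wm = mat m r (\<lambda>(c, i). w i c)"
  have Wm: "Wm \<in> carrier_mat m r" unfolding Wm_def by auto
  \<comment> \<open>\<open>A (Wm x) = 0\<close> gives \<open>\<langle>w\<^sub>i, Wm x\<rangle> = 0\<close> for all \<open>i\<close> by independence of the \<open>v\<^sub>i\<close>,
    so \<open>Wm x = 0\<close>, and then \<open>x = 0\<close> by independence of the \<open>w\<^sub>i\<close>.\<close>
  have "vec_space.rank N (A * Wm) = r"
  proof (rule vec_space.rank_eq_dim_col_if_kernel_trivial)
    show "A * Wm \<in> carrier_mat N r" using A Wm by auto
    fix x :: "real vec" assume x: "x \<in> carrier_vec r" and AWx: "(A * Wm) *\<^sub>v x = 0\<^sub>v N"
    define y where "y c = (\<Sum>i<r. x $ i * w i c)" for c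
    define u where "u i = (\<Sum>c<m. w i c * y c)" for i
    have Wmx: "Wm *\<^sub>v x \<in> carrier_vec m" using Wm x by simp
    have Wmx_index: "(Wm *\<^sub>v x) $ c = y c" if "c < m" for c
      unfolding index_mult_mat_vec_sum[OF Wm x that] y_def using that by (simp add: Wm_def ac_simps)
    have "(\<Sum>i<r. u i * v i a) = 0" if "a < N" for a
    proof -
      have "(\<Sum>i<r. u i * v i a) = (\<Sum>c<m. A $$ (a, c) * y c)"
        unfolding u_def using that
        by (simp add: entries sum_distrib_left sum_distrib_right ac_simps sum.swap[of _ "{..<r}"])
      also have "\<dots> = (A *\<^sub>v (Wm *\<^sub>v x)) $ a"
        unfolding index_mult_mat_vec_sum[OF A Wmx that] by (intro sum.cong) (simp_all add: Wmx_index)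
      also have "\<dots> = ((A * Wm) *\<^sub>v x) $ a"
        by (simp add: assoc_mult_mat_vec[OF A Wm x])
      finally show ?thesis using AWx that by simp
    qed
    then have "\<forall>i<r. u i = 0" using v unfolding independent_family_def by blast
    have "(\<Sum>c<m. (y c)\<^sup>2) = (\<Sum>c<m. \<Sum>i<r. x $ i * (w i c * y c))"
      by (simp add: power2_eq_square y_def sum_distrib_right ac_simps)
    also have "\<dots> = (\<Sum>i<r. x $ i * u i)"
      unfolding u_def by (subst sum.swap) (simp add: sum_distrib_left)
    finally have "(\<Sum>c<m. (y c)\<^sup>2) = 0" using \<open>\<forall>i<r. u i = 0\<close> by simp
    then have "\<forall>c<m. (\<Sum>i<r. x $ i * w i c) = 0" unfolding sum_sq_eq_0_iff y_def .
    then have "\<forall>i<r. x $ i = 0" using w unfolding independent_family_def by blast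
    then show "x = 0\<^sub>v r" using x by (intro eq_vecI) auto
  qed
  moreover have "vec_space.rank N (A * Wm) \<le> vec_space.rank N A"
    by (rule vec_space.rank_mult_le[OF A Wm])
  ultimately show ?thesis using rank_outer_sum_le[OF A entries] by linarith
qed

lemma div_one_minus_le_twice:
  fixes t :: real
  assumes "0 \<le> t" "t \<le> 1 / 2"
  shows "t / (1 - t) \<le> 2 * t"
proof -
  have "0 \<le> t * (1 - 2 * t)" using assms by simp
  then show ?thesis using assms by (simp add: divide_le_eq algebra_simps)
qed

definition incoherent_family :: "nat \<Rightarrow> nat \<Rightarrow> (nat \<Rightarrow> nat \<Rightarrow> real) \<Rightarrow> real \<Rightarrow> bool" where
  "incoherent_family r N v \<epsilon> \<longleftrightarrow> 0 \<le> \<epsilon> \<and> r * \<epsilon> \<le> 1 / 2 \<and>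
     (\<forall>i<r. vnorm2 N (v i) \<noteq> 0) \<and>
     (\<forall>i<r. \<forall>a<N. (v i a)\<^sup>2 / (vnorm2 N (v i))\<^sup>2 \<le> \<epsilon>) \<and>
     (\<forall>i<r. \<forall>i'<r. i \<noteq> i' \<longrightarrow>
        \<bar>vinner N (v i) (v i')\<bar> / (vnorm2 N (v i) * vnorm2 N (v i')) \<le> \<epsilon>)"

lemma compact_svd_outer_sum_incoherent:
  assumes svd: "compact_svd A U S V" and A: "A \<in> carrier_mat N m"
    and entries: "\<And>a c. a < N \<Longrightarrow> c < m \<Longrightarrow> A $$ (a, c) = (\<Sum>i<r. v i a * w i c)"
    and v: "incoherent_family r N v \<epsilon>" and w: "incoherent_family r m w \<delta>"
  shows "vec_space.rank N A = r" "dim_col U = r"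
    "norm_2inf_sq U \<le> 2 * real r * \<epsilon>" "norm_2inf_sq V \<le> 2 * real r * \<delta>"
proof -
  have indep: "independent_family r N v" "independent_family r m w"
    using v w unfolding incoherent_family_def
    by (auto intro!: independent_family_if_near_orthonormal)
  show rank: "vec_space.rank N A = r" by (rule rank_outer_sum[OF A entries indep])
  show "dim_col U = r" using compact_svd_rank[OF svd] A rank by simp
  have rowU: "(\<Sum>b<dim_col U. (U $$ (a, b))\<^sup>2) \<le> 2 * real r * \<epsilon>" if "a < N" for a
  proof -
    have "(\<Sum>b<dim_col U. (U $$ (a, b))\<^sup>2) \<le> r * \<epsilon> / (1 - r * \<epsilon>)"
      using v that unfolding incoherent_family_def
      by (intro compact_svd_row_norm_le[OF svd A entries]) auto
    also have "\<dots> \<le> 2 * real r * \<epsilon>"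
      using v div_one_minus_le_twice[of "r * \<epsilon>"] unfolding incoherent_family_def by simp
    finally show ?thesis .
  qed
  have "dim_row U = N" using compact_svdD(1)[OF svd] A by simp
  then show "norm_2inf_sq U \<le> 2 * real r * \<epsilon>"
    using v by (intro norm_2inf_sq_le) (simp_all add: rowU incoherent_family_def)
  have svdT: "compact_svd (transpose_mat A) V S U" by (rule compact_svd_transpose[OF svd])
  have AT: "transpose_mat A \<in> carrier_mat m N" using A by simp
  have rowV: "(\<Sum>b<dim_col V. (V $$ (c, b))\<^sup>2) \<le> 2 * real r * \<delta>" if "c < m" for c
  proof -
    have "(\<Sum>b<dim_col V. (V $$ (c, b))\<^sup>2) \<le> r * \<delta> / (1 - r * \<delta>)"
      using w that A entries unfolding incoherent_family_def
      by (intro compact_svd_row_norm_le[OF svdT AT, where r = r and v = w and w = v]) (auto simp: ac_simps)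
    also have "\<dots> \<le> 2 * real r * \<delta>"
      using w div_one_minus_le_twice[of "r * \<delta>"] unfolding incoherent_family_def by simp
    finally show ?thesis .
  qed
  have "dim_row V = m" using compact_svdD(3)[OF svd] A by simp
  then show "norm_2inf_sq V \<le> 2 * real r * \<delta>"
    using w by (intro norm_2inf_sq_le) (simp_all add: rowV incoherent_family_def)
qed

section \<open>Kronecker products\<close>

(* Least significant digit first, as in the column encoding of unfold_index. *)
definition mixed_radix_digit :: "nat set \<Rightarrow> (nat \<Rightarrow> nat) \<Rightarrow> nat \<Rightarrow> nat \<Rightarrow> nat" where
  "mixed_radix_digit L n c l = (c div (\<Prod>l'\<in>{l'\<in>L. l' < l}. n l')) mod n l"

definition kron :: "nat set \<Rightarrow> (nat \<Rightarrow> nat) \<Rightarrow> (nat \<Rightarrow> nat \<Rightarrow> real) \<Rightarrow> nat \<Rightarrow> real" where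
  "kron L n v c = (\<Prod>l\<in>L. v l (mixed_radix_digit L n c l))"

lemma sum_lessThan_mult:
  fixes g :: "nat \<Rightarrow> 'a::comm_monoid_add"
  shows "(\<Sum>c<M * N. g c) = (\<Sum>q<M. \<Sum>c<N. g (c + q * N))"
proof -
  have "(\<Sum>c<M * N. g c) = (\<Sum>q<M. sum g {q * N..<q * N + N})"
    by (rule sum.nat_group[symmetric])
  also have "\<dots> = (\<Sum>q<M. \<Sum>c<N. g (c + q * N))"
  proof (rule sum.cong[OF refl])
    fix q
    have "sum g {0 + q * N..<N + q * N} = (\<Sum>c\<in>{0..<N}. g (c + q * N))"
      by (rule sum.shift_bounds_nat_ivl)
    then show "sum g {q * N..<q * N + N} = (\<Sum>c<N. g (c + q * N))"
      by (simp add: atLeast0LessThan add.commute)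
  qed
  finally show ?thesis .
qed

lemma mixed_radix_digit_add_mult:
  assumes "finite L" and "l \<in> L"
  shows "mixed_radix_digit L n (c + q * (\<Prod>l'\<in>L. n l')) l = mixed_radix_digit L n c l"
proof -
  define P where "P = (\<Prod>l'\<in>{l'\<in>L. l' < l}. n l')"
  have "(\<Prod>l'\<in>insert l {l'\<in>L. l' < l}. n l') dvd (\<Prod>l'\<in>L. n l')"
    using assms by (intro prod_dvd_prod_subset) auto
  moreover have "(\<Prod>l'\<in>insert l {l'\<in>L. l' < l}. n l') = n l * P"
    unfolding P_def using assms(1) by (subst prod.insert) auto
  ultimately obtain K where K: "(\<Prod>l'\<in>L. n l') = n l * P * K" by (auto elim!: dvdE)
  show ?thesis
  proof (cases "P = 0")
    case False
    have "c + q * (\<Prod>l'\<in>L. n l') = c + (q * K * n l) * P" unfolding K by (simp add: ac_simps)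
    then have "(c + q * (\<Prod>l'\<in>L. n l')) div P = c div P + q * K * n l"
      using False by (metis div_mult_self1 add.commute)
    then show ?thesis unfolding mixed_radix_digit_def P_def[symmetric] by simp
  qed (simp add: mixed_radix_digit_def P_def[symmetric])
qed

lemma sum_prod_mixed_radix_digit:
  fixes f :: "nat \<Rightarrow> nat \<Rightarrow> 'a::comm_semiring_1"
  assumes "finite L"
  shows "(\<Sum>c<(\<Prod>l\<in>L. n l). \<Prod>l\<in>L. f l (mixed_radix_digit L n c l)) = (\<Prod>l\<in>L. \<Sum>a<n l. f l a)"
  using assms
proof (induction L rule: finite_linorder_max_induct)
  case (insert b L)
  \<comment> \<open>The new largest index \<open>b\<close> carries the most significant digit \<open>c div N\<close>.\<close>
  define N where "N = (\<Prod>l\<in>L. n l)"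
  have "b \<notin> L" using insert.hyps(2) by auto
  have digit_L: "mixed_radix_digit (insert b L) n c l = mixed_radix_digit L n c l" if "l \<in> L" for c l
  proof -
    have "{l' \<in> insert b L. l' < l} = {l' \<in> L. l' < l}" using insert.hyps(2) that by auto
    then show ?thesis unfolding mixed_radix_digit_def by simp
  qed
  have digit_b: "mixed_radix_digit (insert b L) n c b = (c div N) mod n b" for c
  proof -
    have "{l' \<in> insert b L. l' < b} = L" using insert.hyps(2) by auto
    then show ?thesis unfolding mixed_radix_digit_def N_def by simp
  qed
  have "(\<Sum>c<(\<Prod>l\<in>insert b L. n l). \<Prod>l\<in>insert b L. f l (mixed_radix_digit (insert b L) n c l))
      = (\<Sum>c<n b * N. f b ((c div N) mod n b) * (\<Prod>l\<in>L. f l (mixed_radix_digit L n c l)))"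
    using insert.hyps(1) \<open>b \<notin> L\<close> unfolding N_def
    by (intro sum.cong) (simp_all add: digit_L digit_b[unfolded N_def] cong: prod.cong)
  also have "\<dots> = (\<Sum>q<n b. \<Sum>c<N. f b (((c + q * N) div N) mod n b) *
        (\<Prod>l\<in>L. f l (mixed_radix_digit L n (c + q * N) l)))"
    by (rule sum_lessThan_mult)
  also have "\<dots> = (\<Sum>q<n b. \<Sum>c<N. f b q * (\<Prod>l\<in>L. f l (mixed_radix_digit L n c l)))"
  proof (intro sum.cong refl)
    fix q c assume "q \<in> {..<n b}" "c \<in> {..<N}"
    then have "((c + q * N) div N) mod n b = q" by auto
    then show "f b (((c + q * N) div N) mod n b) * (\<Prod>l\<in>L. f l (mixed_radix_digit L n (c + q * N) l))
        = f b q * (\<Prod>l\<in>L. f l (mixed_radix_digit L n c l))"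
      using insert.hyps(1) unfolding N_def by (simp add: mixed_radix_digit_add_mult cong: prod.cong)
  qed
  also have "\<dots> = (\<Sum>q<n b. f b q) * (\<Sum>c<N. \<Prod>l\<in>L. f l (mixed_radix_digit L n c l))"
    by (rule sum_product[symmetric])
  also have "\<dots> = (\<Prod>l\<in>insert b L. \<Sum>a<n l. f l a)"
    using insert.IH insert.hyps(1) \<open>b \<notin> L\<close> unfolding N_def by simp
  finally show ?case .
qed simp

lemma mixed_radix_digit_less:
  assumes "finite L" "l \<in> L" "c < (\<Prod>l\<in>L. n l)"
  shows "mixed_radix_digit L n c l < n l"
proof -
  have "n l \<noteq> 0" using assms by (metis not_less_zero prod_zero)
  then show ?thesis unfolding mixed_radix_digit_def by simp
qed

lemma vinner_kron:
  assumes "finite L"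
  shows "vinner (\<Prod>l\<in>L. n l) (kron L n v) (kron L n w) = (\<Prod>l\<in>L. vinner (n l) (v l) (w l))"
  unfolding vinner_def kron_def prod.distrib[symmetric]
  by (rule sum_prod_mixed_radix_digit[OF assms, of "\<lambda>l a. v l a * w l a"])

lemma vnorm2_kron:
  assumes "finite L"
  shows "vnorm2 (\<Prod>l\<in>L. n l) (kron L n v) = (\<Prod>l\<in>L. vnorm2 (n l) (v l))"
proof -
  have "vnorm2 d u = sqrt (vinner d u u)" for d u
    unfolding vnorm2_def vinner_def by (simp add: power2_eq_square)
  moreover have "sqrt (\<Prod>l\<in>L. g l) = (\<Prod>l\<in>L. sqrt (g l))" for g :: "nat \<Rightarrow> real"
    using assms by (induction L rule: finite_induct) (simp_all add: real_sqrt_mult)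
  ultimately show ?thesis using vinner_kron[OF assms] by simp
qed

lemma kron_coherence:
  assumes "finite L"
    and "\<And>l. l \<in> L \<Longrightarrow> \<bar>vinner (n l) (v l) (w l)\<bar> / (vnorm2 (n l) (v l) * vnorm2 (n l) (w l)) \<le> e l"
  shows "\<bar>vinner (\<Prod>l\<in>L. n l) (kron L n v) (kron L n w)\<bar>
      / (vnorm2 (\<Prod>l\<in>L. n l) (kron L n v) * vnorm2 (\<Prod>l\<in>L. n l) (kron L n w)) \<le> (\<Prod>l\<in>L. e l)"
proof -
  have "\<bar>vinner (\<Prod>l\<in>L. n l) (kron L n v) (kron L n w)\<bar>
      / (vnorm2 (\<Prod>l\<in>L. n l) (kron L n v) * vnorm2 (\<Prod>l\<in>L. n l) (kron L n w))
      = (\<Prod>l\<in>L. \<bar>vinner (n l) (v l) (w l)\<bar> / (vnorm2 (n l) (v l) * vnorm2 (n l) (w l)))"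
    unfolding vinner_kron[OF assms(1)] vnorm2_kron[OF assms(1)] abs_prod prod.distrib[symmetric]
    by (rule prod_dividef[symmetric])
  also have "\<dots> \<le> (\<Prod>l\<in>L. e l)"
    using assms(2) by (intro prod_mono) (auto simp: vnorm2_nonneg)
  finally show ?thesis .
qed

lemma kron_spikiness:
  assumes "finite L" and c: "c < (\<Prod>l\<in>L. n l)"
    and "\<And>l a. l \<in> L \<Longrightarrow> a < n l \<Longrightarrow> (v l a)\<^sup>2 / (vnorm2 (n l) (v l))\<^sup>2 \<le> e l"
  shows "(kron L n v c)\<^sup>2 / (vnorm2 (\<Prod>l\<in>L. n l) (kron L n v))\<^sup>2 \<le> (\<Prod>l\<in>L. e l)"
proof -
  have "(kron L n v c)\<^sup>2 / (vnorm2 (\<Prod>l\<in>L. n l) (kron L n v))\<^sup>2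
      = (\<Prod>l\<in>L. (v l (mixed_radix_digit L n c l))\<^sup>2 / (vnorm2 (n l) (v l))\<^sup>2)"
    unfolding kron_def vnorm2_kron[OF assms(1)] power_divide prod_power_distrib prod_dividef ..
  also have "\<dots> \<le> (\<Prod>l\<in>L. e l)"
    using assms(3) mixed_radix_digit_less[OF assms(1) _ c] by (intro prod_mono) auto
  finally show ?thesis .
qed

lemma prod_le_factor:
  fixes e :: "'a \<Rightarrow> real"
  assumes "finite L" "l0 \<in> L" "\<And>l. l \<in> L \<Longrightarrow> 0 \<le> e l \<and> e l \<le> 1"
  shows "(\<Prod>l\<in>L. e l) \<le> e l0"
proof -
  have "(\<Prod>l\<in>L. e l) = e l0 * (\<Prod>l\<in>L - {l0}. e l)" by (rule prod.remove[OF assms(1,2)])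
  also have "\<dots> \<le> e l0 * 1"
    using assms by (intro mult_left_mono prod_le_1) auto
  finally show ?thesis by simp
qed

lemma incoherent_family_kron:
  assumes "finite L" "l0 \<in> L"
    and incoh: "\<And>l. l \<in> L \<Longrightarrow> incoherent_family r (n l) (\<lambda>i. x i l) (e l)"
  shows "incoherent_family r (\<Prod>l\<in>L. n l) (\<lambda>i. kron L n (x i)) (\<Prod>l\<in>L. e l)"
proof -
  have e: "0 \<le> e l" "r * e l \<le> 1 / 2" if "l \<in> L" for l
    using incoh[OF that] unfolding incoherent_family_def by auto
  have "r * (\<Prod>l\<in>L. e l) \<le> 1 / 2"
  proof (cases "r = 0")
    case False
    then have "e l \<le> 1" if "l \<in> L" for l
      using e[OF that] mult_right_mono[of 1 "real r" "e l"] by linarith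
    then have "(\<Prod>l\<in>L. e l) \<le> e l0"
      using e(1) by (intro prod_le_factor[OF assms(1,2)]) auto
    then have "r * (\<Prod>l\<in>L. e l) \<le> r * e l0" by (simp add: mult_left_mono)
    then show ?thesis using e(2)[OF assms(2)] by linarith
  qed simp
  moreover have "vnorm2 (\<Prod>l\<in>L. n l) (kron L n (x i)) \<noteq> 0" if "i < r" for i
    using incoh that assms(1) unfolding vnorm2_kron[OF assms(1)] incoherent_family_def by auto
  moreover have "(kron L n (x i) c)\<^sup>2 / (vnorm2 (\<Prod>l\<in>L. n l) (kron L n (x i)))\<^sup>2 \<le> (\<Prod>l\<in>L. e l)"
    if "i < r" "c < (\<Prod>l\<in>L. n l)" for i c
    using incoh that unfolding incoherent_family_def by (intro kron_spikiness[OF assms(1)]) auto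
  moreover have "\<bar>vinner (\<Prod>l\<in>L. n l) (kron L n (x i)) (kron L n (x i'))\<bar>
      / (vnorm2 (\<Prod>l\<in>L. n l) (kron L n (x i)) * vnorm2 (\<Prod>l\<in>L. n l) (kron L n (x i')))
      \<le> (\<Prod>l\<in>L. e l)" if "i < r" "i' < r" "i \<noteq> i'" for i i'
    using incoh that unfolding incoherent_family_def by (intro kron_coherence[OF assms(1)]) auto
  ultimately show ?thesis unfolding incoherent_family_def using e(1) by (auto intro: prod_nonneg)
qed

section \<open>Unfoldings of a CP decomposition\<close>

lemma unfold_index_eq_mixed_radix_digit:
  assumes "l < k" "l \<noteq> j"
  shows "unfold_index k n j a c l = mixed_radix_digit {l. l < k \<and> l \<noteq> j} n c l"
proof -
  have "{l'. l' < l \<and> l' \<noteq> j} = {l' \<in> {l. l < k \<and> l \<noteq> j}. l' < l}" using assms by auto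
  then show ?thesis unfolding unfold_index_def mixed_radix_digit_def using assms by simp
qed

lemma unfold_mat_cp_entry:
  fixes x :: "nat \<Rightarrow> nat \<Rightarrow> nat \<Rightarrow> real"
  assumes decomp: "\<And>idx. (\<forall>j<k. idx j < n j) \<Longrightarrow> T idx = (\<Sum>i<r. \<Prod>j<k. x i j (idx j))"
    and j: "j < k" and a: "a < n j" and c: "c < other_dims_prod k n j"
  shows "unfold_mat k n j T $$ (a, c) = (\<Sum>i<r. x i j a * kron {l. l < k \<and> l \<noteq> j} n (x i) c)"
proof -
  define L where "L = {l. l < k \<and> l \<noteq> j}"
  define idx where "idx = unfold_index k n j a c"
  have finL: "finite L" unfolding L_def by auto
  have c': "c < (\<Prod>l\<in>L. n l)" using c unfolding other_dims_prod_def L_def .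
  have idx_L: "idx l = mixed_radix_digit L n c l" if "l \<in> L" for l
    using that unfolding idx_def L_def by (simp add: unfold_index_eq_mixed_radix_digit)
  have idx_j: "idx j = a" unfolding idx_def unfold_index_def by simp
  have "\<forall>l<k. idx l < n l"
  proof (intro allI impI)
    fix l assume "l < k"
    then show "idx l < n l"
      using idx_j a mixed_radix_digit_less[OF finL _ c'] idx_L unfolding L_def by (cases "l = j") auto
  qed
  then have "unfold_mat k n j T $$ (a, c) = (\<Sum>i<r. \<Prod>l<k. x i l (idx l))"
    using a c decomp unfolding unfold_mat_def idx_def by simp
  also have "\<dots> = (\<Sum>i<r. x i j a * kron L n (x i) c)"
  proof (intro sum.cong refl)
    fix i
    have "{..<k} = insert j L" "j \<notin> L" using j unfolding L_def by auto
    then show "(\<Prod>l<k. x i l (idx l)) = x i j a * kron L n (x i) c"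
      using finL idx_j idx_L by (simp add: kron_def)
  qed
  finally show ?thesis unfolding L_def .
qed

lemma unfold_mat_incoherent:
  fixes k r :: nat and n :: "nat \<Rightarrow> nat" and T :: "(nat \<Rightarrow> nat) \<Rightarrow> real"
    and x :: "nat \<Rightarrow> nat \<Rightarrow> nat \<Rightarrow> real" and \<mu> :: real
  assumes k2: "k \<ge> 2"
    and decomp: "\<And>idx. (\<forall>j<k. idx j < n j) \<Longrightarrow> T idx = (\<Sum>i<r. \<Prod>j<k. x i j (idx j))"
    and nonzero: "\<And>i j. i < r \<Longrightarrow> j < k \<Longrightarrow> \<exists>l<n j. x i j l \<noteq> 0"
    and rmu: "\<And>j. j < k \<Longrightarrow> real r * \<mu> \<le> real (n j) / 2"
    and spiky: "\<And>i j. i < r \<Longrightarrow> j < k \<Longrightarrow>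
        (vnorm_inf (n j) (x i j))\<^sup>2 / (vnorm2 (n j) (x i j))\<^sup>2 \<le> \<mu> / real (n j)"
    and inner: "\<And>i i' j. i < r \<Longrightarrow> i' < r \<Longrightarrow> i \<noteq> i' \<Longrightarrow> j < k \<Longrightarrow>
        \<bar>vinner (n j) (x i j) (x i' j)\<bar> / (vnorm2 (n j) (x i j) * vnorm2 (n j) (x i' j))
          \<le> \<mu> / real (n j)"
    and "0 \<le> \<mu>" and j: "j < k"
    and svd: "compact_svd (unfold_mat k n j T) U S V"
  shows "vec_space.rank (n j) (unfold_mat k n j T) = r" "dim_col U = r"
    "norm_2inf_sq U \<le> 2 * \<mu> * real r / real (n j)"
    "norm_2inf_sq V \<le> 2 * \<mu> ^ (k - 1) * real r / real (other_dims_prod k n j)"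
proof -
  define L where "L = {l. l < k \<and> l \<noteq> j}"
  have finL: "finite L" unfolding L_def by auto
  have m: "other_dims_prod k n j = (\<Prod>l\<in>L. n l)" unfolding other_dims_prod_def L_def ..
  have incoh: "incoherent_family r (n l) (\<lambda>i. x i l) (\<mu> / n l)" if l: "l < k" for l
    unfolding incoherent_family_def
  proof (intro conjI allI impI)
    show "0 \<le> \<mu> / n l" using \<open>0 \<le> \<mu>\<close> by simp
    show "r * (\<mu> / n l) \<le> 1 / 2"
      using rmu[OF l] by (cases "n l = 0") (simp_all add: field_simps)
    show "vnorm2 (n l) (x i l) \<noteq> 0" if "i < r" for i
      using nonzero[OF that l] by (auto simp: vnorm2_eq_0_iff)
    show "(x i l a)\<^sup>2 / (vnorm2 (n l) (x i l))\<^sup>2 \<le> \<mu> / n l" if "i < r" "a < n l" for i a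
      using divide_right_mono[OF sq_le_vnorm_inf_sq[of a "n l" "x i l"], of "(vnorm2 (n l) (x i l))\<^sup>2"]
        spiky[OF that(1) l] that(2) by simp
    show "\<bar>vinner (n l) (x i l) (x i' l)\<bar> / (vnorm2 (n l) (x i l) * vnorm2 (n l) (x i' l)) \<le> \<mu> / n l"
      if "i < r" "i' < r" "i \<noteq> i'" for i i'
      using inner[OF that l] .
  qed
  have "(if j = 0 then 1 else 0) \<in> L" using k2 unfolding L_def by auto
  then have incoh_kron: "incoherent_family r (other_dims_prod k n j) (\<lambda>i. kron L n (x i)) (\<Prod>l\<in>L. \<mu> / n l)"
    unfolding m by (rule incoherent_family_kron[OF finL]) (use incoh in \<open>simp add: L_def\<close>)
  have "card L = k - 1"
  proof -
    have "L = {..<k} - {j}" unfolding L_def by auto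
    then show ?thesis using j by simp
  qed
  then have prod_eq: "(\<Prod>l\<in>L. \<mu> / n l) = \<mu> ^ (k - 1) / other_dims_prod k n j"
    unfolding m prod_dividef by simp
  have A: "unfold_mat k n j T \<in> carrier_mat (n j) (other_dims_prod k n j)"
    unfolding unfold_mat_def by simp
  note outer = compact_svd_outer_sum_incoherent[OF svd A
      unfold_mat_cp_entry[OF decomp j, folded L_def] incoh[OF j] incoh_kron]
  show "vec_space.rank (n j) (unfold_mat k n j T) = r" using outer(1) by simp
  show "dim_col U = r" using outer(2) by simp
  show "norm_2inf_sq U \<le> 2 * \<mu> * real r / real (n j)" using outer(3) by (simp add: ac_simps)
  show "norm_2inf_sq V \<le> 2 * \<mu> ^ (k - 1) * real r / real (other_dims_prod k n j)"
    using outer(4) unfolding prod_eq by (simp add: ac_simps)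
qed

theorem lemma2p3:
  fixes k r :: nat and n :: "nat \<Rightarrow> nat" and T :: "(nat \<Rightarrow> nat) \<Rightarrow> real"
    and x :: "nat \<Rightarrow> nat \<Rightarrow> nat \<Rightarrow> real" and \<mu> :: real
  assumes k2: "k \<ge> 2"
    and decomp: "\<And>idx. (\<forall>j<k. idx j < n j) \<Longrightarrow> T idx = (\<Sum>i<r. \<Prod>j<k. x i j (idx j))"
    and nonzero: "\<And>i j. i < r \<Longrightarrow> j < k \<Longrightarrow> \<exists>l<n j. x i j l \<noteq> 0"
    and rmu: "\<And>j. j < k \<Longrightarrow> real r * \<mu> \<le> real (n j) / 2"
    and spiky: "\<And>i j. i < r \<Longrightarrow> j < k \<Longrightarrow>
        (vnorm_inf (n j) (x i j))\<^sup>2 / (vnorm2 (n j) (x i j))\<^sup>2 \<le> \<mu> / real (n j)"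
    and inner: "\<And>i i' j. i < r \<Longrightarrow> i' < r \<Longrightarrow> i \<noteq> i' \<Longrightarrow> j < k \<Longrightarrow>
        \<bar>vinner (n j) (x i j) (x i' j)\<bar> / (vnorm2 (n j) (x i j) * vnorm2 (n j) (x i' j))
          \<le> \<mu> / real (n j)"
  shows "\<exists>\<mu>1 \<mu>2. \<mu>1 \<le> 2 * \<mu> \<and> \<mu>2 \<le> 2 * \<mu> ^ (k - 1) \<and> tensor_incoherent k n T \<mu>1 \<mu>2"
proof -
  have "tensor_incoherent k n T (2 * \<mu>) (2 * \<mu> ^ (k - 1))"
    unfolding tensor_incoherent_def Let_def
  proof (intro allI impI)
    fix j U S V assume j: "j < k" and svd: "compact_svd (unfold_mat k n j T) U S V"
    show "dim_col U = vec_space.rank (n j) (unfold_mat k n j T) \<and>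
      norm_2inf_sq U \<le> 2 * \<mu> * real (vec_space.rank (n j) (unfold_mat k n j T)) / real (n j) \<and>
      norm_2inf_sq V \<le> 2 * \<mu> ^ (k - 1) * real (vec_space.rank (n j) (unfold_mat k n j T)) /
        real (other_dims_prod k n j)"
    proof (cases "r = 0")
      case True
      \<comment> \<open>Without summands the hypotheses also hold for \<open>\<mu> = 0\<close>, and all bounds vanish.\<close>
      have "vec_space.rank (n j) (unfold_mat k n j T) = 0" "dim_col U = 0"
        "norm_2inf_sq U \<le> 0" "norm_2inf_sq V \<le> 0"
        using unfold_mat_incoherent[where \<mu> = 0, OF k2 decomp _ _ _ _ _ j svd] True by simp_all
      then show ?thesis by simp
    next
      case False
      then obtain l where "l < n 0" "x 0 0 l \<noteq> 0" using nonzero[of 0 0] k2 by auto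
      then have "0 < \<mu> / n 0" using spiky[of 0 0] spikiness_pos False k2 by fastforce
      then have "0 \<le> \<mu>" by (simp add: zero_less_divide_iff)
      from unfold_mat_incoherent[OF k2 decomp nonzero rmu spiky inner this j svd]
      show ?thesis by simp
    qed
  qed
  then show ?thesis by blast
qed

end
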